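(* Let $G$ be a connected graph in $\mathcal{C}$ and $C$ an induced $C_5$ in $G$ with vertices $0,\dots,4$ in cyclic order. Suppose that for some $i$ the sets $X_i, X_{i+1}, X_{i+2}$ are all nonempty, and let $\{j,k,\ell\}=\{i,i+1,i+2\}$. If $|X_j|\ge 3$, then $|X_k|=|X_\ell|=1$.
   Context: $\mathcal{C}=\mathrm{Free}(\text{claw}, 4K_1, \text{5-wheel}, C_5\text{-twin}, P_5\text{-twin}, K_5-e)$, where $\mathrm{Free}(L)$ is the class of graphs with no induced subgraph isomorphic to a member of $L$; the claw is $K_{1,3}$; $4K_1$ is the edgeless graph on 4 vertices; the 5-wheel is $C_5$ plus a vertex adjacent to all five cycle vertices; the $C_5$-twin is $C_5$ plus a new vertex adjacent to one cycle vertex $v$ and both cycle-neighbours of $v$; the $P_5$-twin is a path $p_1p_2p_3p_4p_5$ plus a new vertex adjacent to exactly $p_2,p_3,p_4$; $K_5-e$ is $K_5$ minus one edge. Given an induced cycle $C$ of length 5 with vertices $0,\dots,4$ in cyclic order (indices taken mod 5): $R$ is the set of vertices outside $C$ with no neighbour in $C$; $X_j$ is the set of vertices outside $C$ whose neighbourhood in $C$ is exactly $\{j,j+1\}$; $Y_j$ is the set of vertices outside $C$ whose neighbourhood in $C$ is exactly $\{j,j+1,j+2,j+3\}$; $X=\bigcup_j X_j$, $Y=\bigcup_j Y_j$. *)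

theory Defs
  imports Main
begin

definition graph :: "'a set \<Rightarrow> ('a \<Rightarrow> 'a \<Rightarrow> bool) \<Rightarrow> bool" where
  "graph V E \<longleftrightarrow> finite V \<and> (\<forall>a b. E a b \<longrightarrow> E b a) \<and> (\<forall>a. \<not> E a a)
     \<and> (\<forall>a b. E a b \<longrightarrow> a \<in> V \<and> b \<in> V)"

definition connected_graph :: "'a set \<Rightarrow> ('a \<Rightarrow> 'a \<Rightarrow> bool) \<Rightarrow> bool" where
  "connected_graph V E \<longleftrightarrow> graph V E \<and> V \<noteq> {} \<and>
     (\<forall>u\<in>V. \<forall>v\<in>V. (u, v) \<in> {(a, b). E a b}\<^sup>*)"

(* Small pattern graphs on vertex set {0..<n}, given by a list of (unordered) edges. *)
definition sym_edges :: "(nat \<times> nat) list \<Rightarrow> nat \<Rightarrow> nat \<Rightarrow> bool" where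
  "sym_edges L a b \<longleftrightarrow> (a, b) \<in> set L \<or> (b, a) \<in> set L"

definition has_induced :: "'a set \<Rightarrow> ('a \<Rightarrow> 'a \<Rightarrow> bool) \<Rightarrow> nat \<Rightarrow> (nat \<Rightarrow> nat \<Rightarrow> bool) \<Rightarrow> bool" where
  "has_induced V E n H \<longleftrightarrow> (\<exists>f. inj_on f {..<n} \<and> f ` {..<n} \<subseteq> V \<and>
      (\<forall>a<n. \<forall>b<n. E (f a) (f b) \<longleftrightarrow> H a b))"

definition claw :: "nat \<Rightarrow> nat \<Rightarrow> bool" where
  "claw = sym_edges [(0,1),(0,2),(0,3)]"

definition fourK1 :: "nat \<Rightarrow> nat \<Rightarrow> bool" where
  "fourK1 = sym_edges []"

definition wheel5 :: "nat \<Rightarrow> nat \<Rightarrow> bool" where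
  "wheel5 = sym_edges [(0,1),(1,2),(2,3),(3,4),(4,0),(5,0),(5,1),(5,2),(5,3),(5,4)]"

definition C5_twin :: "nat \<Rightarrow> nat \<Rightarrow> bool" where
  "C5_twin = sym_edges [(0,1),(1,2),(2,3),(3,4),(4,0),(5,4),(5,0),(5,1)]"

definition P5_twin :: "nat \<Rightarrow> nat \<Rightarrow> bool" where
  "P5_twin = sym_edges [(0,1),(1,2),(2,3),(3,4),(5,1),(5,2),(5,3)]"

definition K5_minus_e :: "nat \<Rightarrow> nat \<Rightarrow> bool" where
  "K5_minus_e = sym_edges [(0,2),(0,3),(0,4),(1,2),(1,3),(1,4),(2,3),(2,4),(3,4)]"

definition in_class_C :: "'a set \<Rightarrow> ('a \<Rightarrow> 'a \<Rightarrow> bool) \<Rightarrow> bool" where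
  "in_class_C V E \<longleftrightarrow> graph V E \<and>
     \<not> has_induced V E 4 claw \<and> \<not> has_induced V E 4 fourK1 \<and>
     \<not> has_induced V E 6 wheel5 \<and> \<not> has_induced V E 6 C5_twin \<and>
     \<not> has_induced V E 6 P5_twin \<and> \<not> has_induced V E 5 K5_minus_e"

definition induced_C5 :: "'a set \<Rightarrow> ('a \<Rightarrow> 'a \<Rightarrow> bool) \<Rightarrow> (nat \<Rightarrow> 'a) \<Rightarrow> bool" where
  "induced_C5 V E c \<longleftrightarrow> inj_on c {..<5} \<and> c ` {..<5} \<subseteq> V \<and>
     (\<forall>i<5. \<forall>j<5. E (c i) (c j) \<longleftrightarrow> (j = (i + 1) mod 5 \<or> i = (j + 1) mod 5))"

definition Xset :: "'a set \<Rightarrow> ('a \<Rightarrow> 'a \<Rightarrow> bool) \<Rightarrow> (nat \<Rightarrow> 'a) \<Rightarrow> nat \<Rightarrow> 'a set" where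
  "Xset V E c j = {v \<in> V - c ` {..<5}.
      {u \<in> c ` {..<5}. E v u} = {c (j mod 5), c ((j + 1) mod 5)}}"

end

theory Submission
  imports Defs "HOL-Number_Theory.Cong"
begin

text \<open>Each \<open>X\<^sub>m\<close> is a clique, since two nonadjacent vertices of
\<open>X\<^sub>m\<close> would form a claw with \<open>c m\<close> and its other neighbour on
the cycle. A vertex outside \<open>X\<^sub>m\<close> has at most one neighbour in
\<open>X\<^sub>m\<close>: two neighbours would give a \<open>K\<^sub>5 - e\<close> if its own
set is next to \<open>X\<^sub>m\<close> on the cycle, and a \<open>P\<^sub>5\<close>-twin if it
is two steps away. Moreover, among representatives of three consecutive sets some two are
adjacent, since otherwise together with \<open>c (i + 4)\<close> they form a
\<open>4K\<^sub>1\<close>. Now if \<open>|X\<^sub>j| \<ge> 3\<close> and \<open>u \<in>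
X\<^sub>k\<close>, \<open>w \<in> X\<^sub>l\<close> were nonadjacent, each of three vertices of
\<open>X\<^sub>j\<close> would be adjacent to \<open>u\<close> or to \<open>w\<close>, while
each of \<open>u\<close>, \<open>w\<close> sees at most one of them. So
\<open>X\<^sub>k\<close> is complete to \<open>X\<^sub>l\<close>, and a single vertex of
\<open>X\<^sub>l\<close> then sees all of \<open>X\<^sub>k\<close>, whence \<open>|X\<^sub>k| =
1\<close>.\<close>

lemma has_induced_of_list:
  assumes "distinct vs" "set vs \<subseteq> V" "length vs = n"
    and "\<forall>a<n. \<forall>b<n. E (vs ! a) (vs ! b) \<longleftrightarrow> H a b"
  shows "has_induced V E n H"
  unfolding has_induced_def
proof (intro exI conjI)
  show "inj_on ((!) vs) {..<n}" using assms by (auto intro: inj_on_nth)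
qed (use assms in auto)

lemma in_class_C_sym: "in_class_C V E \<Longrightarrow> E a b \<longleftrightarrow> E b a"
  unfolding in_class_C_def graph_def by blast

lemma in_class_C_irrefl: "in_class_C V E \<Longrightarrow> \<not> E a a"
  unfolding in_class_C_def graph_def by blast

lemma in_class_C_no_claw:
  assumes G: "in_class_C V E" and "distinct [a, b, c, d]" "set [a, b, c, d] \<subseteq> V"
    and "E a b" "E a c" "E a d" "\<not> E b c" "\<not> E b d" "\<not> E c d"
  shows False
proof -
  have "has_induced V E 4 claw"
    by (rule has_induced_of_list[of "[a, b, c, d]"])
      (use assms in \<open>simp_all add: claw_def sym_edges_def All_less_Suc eval_nat_numeral
          in_class_C_sym[OF G] in_class_C_irrefl[OF G]\<close>)
  with G show False by (simp add: in_class_C_def)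
qed

lemma in_class_C_no_4K1:
  assumes G: "in_class_C V E" and "distinct [a, b, c, d]" "set [a, b, c, d] \<subseteq> V"
    and "\<not> E a b" "\<not> E a c" "\<not> E a d" "\<not> E b c" "\<not> E b d" "\<not> E c d"
  shows False
proof -
  have "has_induced V E 4 fourK1"
    by (rule has_induced_of_list[of "[a, b, c, d]"])
      (use assms in \<open>simp_all add: fourK1_def sym_edges_def All_less_Suc eval_nat_numeral
          in_class_C_sym[OF G] in_class_C_irrefl[OF G]\<close>)
  with G show False by (simp add: in_class_C_def)
qed

lemma in_class_C_no_K5_minus_e:
  assumes G: "in_class_C V E" and "distinct [a, b, c, d, e]" "set [a, b, c, d, e] \<subseteq> V"
    and "E a c" "E a d" "E a e" "E b c" "E b d" "E b e" "E c d" "E c e" "E d e" "\<not> E a b"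
  shows False
proof -
  have "has_induced V E 5 K5_minus_e"
    by (rule has_induced_of_list[of "[a, b, c, d, e]"])
      (use assms in \<open>simp_all add: K5_minus_e_def sym_edges_def All_less_Suc eval_nat_numeral
          in_class_C_sym[OF G] in_class_C_irrefl[OF G]\<close>)
  with G show False by (simp add: in_class_C_def)
qed

lemma in_class_C_no_P5_twin:
  assumes G: "in_class_C V E" and "distinct [a, b, c, d, e, f]" "set [a, b, c, d, e, f] \<subseteq> V"
    and "E a b" "E b c" "E c d" "E d e" "E f b" "E f c" "E f d"
    and "\<not> E a c" "\<not> E a d" "\<not> E a e" "\<not> E a f" "\<not> E b d" "\<not> E b e" "\<not> E c e" "\<not> E e f"
  shows False
proof -
  have "has_induced V E 6 P5_twin"
    by (rule has_induced_of_list[of "[a, b, c, d, e, f]"])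
      (use assms in \<open>simp_all add: P5_twin_def sym_edges_def All_less_Suc eval_nat_numeral
          in_class_C_sym[OF G] in_class_C_irrefl[OF G]\<close>)
  with G show False by (simp add: in_class_C_def)
qed

lemma induced_C5_adj:
  "induced_C5 V E c \<Longrightarrow> i < 5 \<Longrightarrow> j < 5 \<Longrightarrow>
    E (c i) (c j) \<longleftrightarrow> j = (i + 1) mod 5 \<or> i = (j + 1) mod 5"
  unfolding induced_C5_def by blast

lemma induced_C5_eq_iff: "induced_C5 V E c \<Longrightarrow> i < 5 \<Longrightarrow> j < 5 \<Longrightarrow> c i = c j \<longleftrightarrow> i = j"
  unfolding induced_C5_def inj_on_def by blast

lemma induced_C5_in_V: "induced_C5 V E c \<Longrightarrow> i < 5 \<Longrightarrow> c i \<in> V"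
  unfolding induced_C5_def by blast

lemmas induced_C5_simps = induced_C5_adj induced_C5_eq_iff induced_C5_in_V

lemma Xset_mod: "Xset V E c (m mod 5) = Xset V E c m"
  unfolding Xset_def by (simp add: mod_Suc_eq)

lemma Xset_in_V: "v \<in> Xset V E c m \<Longrightarrow> v \<in> V"
  unfolding Xset_def by blast

lemma Xset_not_on_cycle: "v \<in> Xset V E c m \<Longrightarrow> n < 5 \<Longrightarrow> c n \<noteq> v"
  unfolding Xset_def by blast

lemma Xset_adj:
  assumes C: "induced_C5 V E c" and v: "v \<in> Xset V E c m" and n: "n < 5"
  shows "E v (c n) \<longleftrightarrow> n = m mod 5 \<or> n = (m + 1) mod 5"
proof -
  have "E v (c n) \<longleftrightarrow> c n \<in> {c (m mod 5), c ((m + 1) mod 5)}"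
    using v n unfolding Xset_def by blast
  also have "\<dots> \<longleftrightarrow> n = m mod 5 \<or> n = (m + 1) mod 5"
    using induced_C5_eq_iff[OF C] n by auto
  finally show ?thesis .
qed

lemma Xset_cycle_simps:
  assumes G: "in_class_C V E" and C: "induced_C5 V E c" and v: "v \<in> Xset V E c m" and n: "n < 5"
  shows "E v (c n) \<longleftrightarrow> n = m mod 5 \<or> n = (m + 1) mod 5"
    and "E (c n) v \<longleftrightarrow> n = m mod 5 \<or> n = (m + 1) mod 5"
    and "v \<noteq> c n" and "c n \<noteq> v"
  using Xset_adj[OF C v n] in_class_C_sym[OF G] Xset_not_on_cycle[OF v n] by auto

lemma mod5_not_mutual_succ:
  assumes "(m::nat) mod 5 = (m' + 1) mod 5" "m' mod 5 = (m + 1) mod 5"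
  shows False
proof -
  have "m mod 5 = (m' mod 5 + 1) mod 5"
    using assms(1) by (simp only: mod_add_left_eq)
  also have "\<dots> = ((m + 1) mod 5 + 1) mod 5"
    using assms(2) by (simp only:)
  also have "\<dots> = (m mod 5 + 2) mod 5"
    by (simp only: mod_add_left_eq add.assoc one_add_one)
  finally have "m mod 5 = (m mod 5 + 2) mod 5" .
  moreover have "m mod 5 = 0 \<or> m mod 5 = 1 \<or> m mod 5 = 2 \<or> m mod 5 = 3 \<or> m mod 5 = 4"
    by arith
  ultimately show False by auto
qed

lemma Xset_disjoint:
  assumes C: "induced_C5 V E c" and "m mod 5 \<noteq> m' mod 5"
    and v: "v \<in> Xset V E c m" and w: "w \<in> Xset V E c m'"
  shows "v \<noteq> w"
proof
  assume "v = w"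
  then have "m mod 5 = (m' + 1) mod 5" "m' mod 5 = (m + 1) mod 5"
    using Xset_adj[OF C v, of "m mod 5"] Xset_adj[OF C w, of "m mod 5"]
      Xset_adj[OF C v, of "m' mod 5"] Xset_adj[OF C w, of "m' mod 5"] assms(2) by auto
  then show False by (rule mod5_not_mutual_succ)
qed

definition rotate_C5 :: "nat \<Rightarrow> (nat \<Rightarrow> 'a) \<Rightarrow> nat \<Rightarrow> 'a" where
  "rotate_C5 r c n = c ((n + r) mod 5)"

lemma mod_add_right_cancel_nat: "(a + r) mod n = (b + r) mod n \<longleftrightarrow> a mod n = (b::nat) mod n"
  using cong_add_rcancel_nat unfolding cong_def .

lemma inj_on_mod5_shift: "inj_on (\<lambda>n. (n + r) mod 5) {..<5::nat}"
  by (rule inj_onI) (simp add: mod_add_right_cancel_nat)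

lemma mod5_shift_image: "(\<lambda>n. (n + r) mod 5) ` {..<5::nat} = {..<5}"
  by (intro endo_inj_surj inj_on_mod5_shift) auto

lemma rotate_C5_image: "rotate_C5 r c ` {..<5} = c ` {..<5}"
  using mod5_shift_image unfolding rotate_C5_def by (metis image_image)

lemma induced_C5_rotate:
  assumes C: "induced_C5 V E c"
  shows "induced_C5 V E (rotate_C5 r c)"
  unfolding induced_C5_def
proof (intro conjI allI impI)
  have "inj_on c ((\<lambda>n. (n + r) mod 5) ` {..<5})"
    using C unfolding induced_C5_def by (auto intro: inj_on_subset)
  with inj_on_mod5_shift show "inj_on (rotate_C5 r c) {..<5}"
    unfolding rotate_C5_def using comp_inj_on[unfolded comp_def] by blast
  show "rotate_C5 r c ` {..<5} \<subseteq> V"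
    using C unfolding rotate_C5_image induced_C5_def by blast
  fix i j :: nat assume "i < 5" "j < 5"
  have shift: "((k + r) mod 5 + 1) mod 5 = (k + 1 + r) mod 5" for k
    by (simp add: mod_simps mod_Suc_eq ac_simps)
  have "E (rotate_C5 r c i) (rotate_C5 r c j)
      \<longleftrightarrow> (j + r) mod 5 = (i + 1 + r) mod 5 \<or> (i + r) mod 5 = (j + 1 + r) mod 5"
    using induced_C5_adj[OF C, of "(i + r) mod 5" "(j + r) mod 5"]
    unfolding rotate_C5_def shift by simp
  also have "\<dots> \<longleftrightarrow> j mod 5 = (i + 1) mod 5 \<or> i mod 5 = (j + 1) mod 5"
    by (simp only: mod_add_right_cancel_nat)
  finally show "E (rotate_C5 r c i) (rotate_C5 r c j) \<longleftrightarrow> j = (i + 1) mod 5 \<or> i = (j + 1) mod 5"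
    using \<open>i < 5\<close> \<open>j < 5\<close> by simp
qed

lemma Xset_rotate_C5: "Xset V E (rotate_C5 r c) m = Xset V E c (m + r)"
proof -
  have "rotate_C5 r c (m mod 5) = c ((m + r) mod 5)"
    and "rotate_C5 r c ((m + 1) mod 5) = c ((m + r + 1) mod 5)"
    unfolding rotate_C5_def by (simp_all add: mod_simps mod_Suc_eq ac_simps)
  then show ?thesis
    unfolding Xset_def rotate_C5_image by simp
qed

lemma Xset_0_clique:
  assumes G: "in_class_C V E" and C: "induced_C5 V E c"
    and x: "x \<in> Xset V E c 0" and x': "x' \<in> Xset V E c 0" and "x \<noteq> x'"
  shows "E x x'"
proof (rule ccontr)
  assume "\<not> E x x'"
  show False
    by (rule in_class_C_no_claw[OF G, of "c 0" "c 4" x x'])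
      (use assms \<open>\<not> E x x'\<close> Xset_in_V[OF x] Xset_in_V[OF x'] in
        \<open>simp_all add: induced_C5_simps[OF C] Xset_cycle_simps[OF G C x] Xset_cycle_simps[OF G C x']\<close>)
qed

lemma Xset_0_unique_neighbour:
  assumes G: "in_class_C V E" and C: "induced_C5 V E c" and n: "n \<in> {1, 2, 3, 4}"
    and v: "v \<in> Xset V E c n" and x: "x \<in> Xset V E c 0" and x': "x' \<in> Xset V E c 0"
    and "x \<noteq> x'" and "E v x" and "E v x'"
  shows False
proof -
  have clique: "E x x'" by (rule Xset_0_clique[OF G C x x' \<open>x \<noteq> x'\<close>])
  have distinct: "v \<noteq> x" "v \<noteq> x'"
    using n Xset_disjoint[OF C _ v x] Xset_disjoint[OF C _ v x'] by auto
  note facts = clique distinct Xset_in_V[OF v] Xset_in_V[OF x] Xset_in_V[OF x'] assms(7-9)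
  note rules = in_class_C_sym[OF G] induced_C5_simps[OF C]
    Xset_cycle_simps[OF G C v] Xset_cycle_simps[OF G C x] Xset_cycle_simps[OF G C x']
  from n show False
  proof (elim insertE emptyE)
    assume "n = 1"
    show False
      by (rule in_class_C_no_K5_minus_e[OF G, of v "c 0" "c 1" x x'])
        (use facts \<open>n = 1\<close> in \<open>simp_all add: rules\<close>)
  next
    assume "n = 2"
    show False
      by (rule in_class_C_no_P5_twin[OF G, of "c 4" "c 0" x v "c 2" x'])
        (use facts \<open>n = 2\<close> in \<open>simp_all add: rules\<close>)
  next
    assume "n = 3"
    show False
      by (rule in_class_C_no_P5_twin[OF G, of "c 2" "c 1" x v "c 4" x'])
        (use facts \<open>n = 3\<close> in \<open>simp_all add: rules\<close>)
  next
    assume "n = 4"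
    show False
      by (rule in_class_C_no_K5_minus_e[OF G, of v "c 1" "c 0" x x'])
        (use facts \<open>n = 4\<close> in \<open>simp_all add: rules\<close>)
  qed
qed

lemma Xset_unique_neighbour:
  assumes G: "in_class_C V E" and C: "induced_C5 V E c" and "m mod 5 \<noteq> n mod 5"
    and v: "v \<in> Xset V E c n" and x: "x \<in> Xset V E c m" and x': "x' \<in> Xset V E c m"
    and "E v x" and "E v x'"
  shows "x = x'"
proof (rule ccontr)
  assume "x \<noteq> x'"
  have "n mod 5 \<in> (\<lambda>k. (k + m) mod 5) ` {..<5}"
    unfolding mod5_shift_image by simp
  then obtain t where t: "t < 5" "(t + m) mod 5 = n mod 5"
    by (auto elim: imageE)
  with \<open>m mod 5 \<noteq> n mod 5\<close> have "t \<noteq> 0" by (metis add_0)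
  with \<open>t < 5\<close> have "t = 1 \<or> t = 2 \<or> t = 3 \<or> t = 4" by arith
  then have "t \<in> {1, 2, 3, 4}" by simp
  moreover have "v \<in> Xset V E (rotate_C5 m c) t"
    using v Xset_mod[of V E c n] unfolding Xset_rotate_C5 t(2)[symmetric] Xset_mod by simp
  moreover have "x \<in> Xset V E (rotate_C5 m c) 0" "x' \<in> Xset V E (rotate_C5 m c) 0"
    using x x' unfolding Xset_rotate_C5 by simp_all
  ultimately show False
    using Xset_0_unique_neighbour[OF G induced_C5_rotate[OF C]] \<open>x \<noteq> x'\<close> assms(7,8) by blast
qed

lemma Xset_0_triangle:
  assumes G: "in_class_C V E" and C: "induced_C5 V E c"
    and x: "x \<in> Xset V E c 0" and y: "y \<in> Xset V E c 1" and z: "z \<in> Xset V E c 2"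
  shows "E x y \<or> E y z \<or> E x z"
proof (rule ccontr)
  assume "\<not> (E x y \<or> E y z \<or> E x z)"
  moreover have "x \<noteq> y" "x \<noteq> z" "y \<noteq> z"
    using Xset_disjoint[OF C _ x y] Xset_disjoint[OF C _ x z] Xset_disjoint[OF C _ y z] by auto
  ultimately show False
    by (intro in_class_C_no_4K1[OF G, of x y z "c 4"])
      (use Xset_in_V[OF x] Xset_in_V[OF y] Xset_in_V[OF z] in
        \<open>simp_all add: induced_C5_simps[OF C] Xset_cycle_simps[OF G C x]
          Xset_cycle_simps[OF G C y] Xset_cycle_simps[OF G C z]\<close>)
qed

lemma Xset_triangle:
  assumes G: "in_class_C V E" and C: "induced_C5 V E c"
    and T: "{j, k, l} = {i mod 5, (i + 1) mod 5, (i + 2) mod 5}"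
    and a: "a \<in> Xset V E c j" and u: "u \<in> Xset V E c k" and w: "w \<in> Xset V E c l"
  shows "E a u \<or> E a w \<or> E u w"
proof -
  have pick: "\<exists>p\<in>{a, u, w}. p \<in> Xset V E c (s + i)" if "(s + i) mod 5 \<in> {j, k, l}" for s
    using that a u w Xset_mod[of V E c "s + i"] by auto
  obtain p q r where "p \<in> {a, u, w}" "q \<in> {a, u, w}" "r \<in> {a, u, w}"
    and "p \<in> Xset V E (rotate_C5 i c) 0" "q \<in> Xset V E (rotate_C5 i c) 1"
    and "r \<in> Xset V E (rotate_C5 i c) 2"
    using pick[of 0] pick[of 1] pick[of 2] T unfolding Xset_rotate_C5 by (auto simp: ac_simps)
  with Xset_0_triangle[OF G induced_C5_rotate[OF C]] have "E p q \<or> E q r \<or> E p r"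
    by blast
  moreover have "E a u \<or> E a w \<or> E u w" if "E s t" "s \<in> {a, u, w}" "t \<in> {a, u, w}" for s t
    using that in_class_C_irrefl[OF G] by (auto simp: in_class_C_sym[OF G])
  ultimately show ?thesis
    using \<open>p \<in> {a, u, w}\<close> \<open>q \<in> {a, u, w}\<close> \<open>r \<in> {a, u, w}\<close> by blast
qed

lemma mod5_consecutive_triple_distinct:
  fixes i j k l :: nat
  assumes "{j, k, l} = {i mod 5, (i + 1) mod 5, (i + 2) mod 5}"
  shows "j mod 5 \<noteq> k mod 5" "j mod 5 \<noteq> l mod 5" "k mod 5 \<noteq> l mod 5"
proof -
  have "card {i mod 5, (i + 1) mod 5, (i + 2) mod 5} = 3"
    by (auto simp: mod_Suc)
  then have "card {j, k, l} = 3" using assms by simp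
  then have "j \<noteq> k" "j \<noteq> l" "k \<noteq> l"
    by (auto simp: card_insert_if split: if_splits)
  moreover have "{j, k, l} \<subseteq> {..<5}"
    unfolding assms by auto
  ultimately show "j mod 5 \<noteq> k mod 5" "j mod 5 \<noteq> l mod 5" "k mod 5 \<noteq> l mod 5"
    by simp_all
qed

lemma Xset_cross_adjacent:
  assumes G: "in_class_C V E" and C: "induced_C5 V E c"
    and T: "{j, k, l} = {i mod 5, (i + 1) mod 5, (i + 2) mod 5}"
    and big: "3 \<le> card (Xset V E c j)"
    and u: "u \<in> Xset V E c k" and w: "w \<in> Xset V E c l"
  shows "E u w"
proof (rule ccontr)
  assume "\<not> E u w"
  obtain B where "B \<subseteq> Xset V E c j" "card B = 3"
    using obtain_subset_with_card_n[OF big] by blast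
  then obtain a1 a2 a3 where a: "a1 \<in> Xset V E c j" "a2 \<in> Xset V E c j" "a3 \<in> Xset V E c j"
    and "a1 \<noteq> a2" "a1 \<noteq> a3" "a2 \<noteq> a3"
    by (auto simp: card_3_iff)
  have cover: "E u a \<or> E w a" if "a \<in> Xset V E c j" for a
    using Xset_triangle[OF G C T that u w] \<open>\<not> E u w\<close> in_class_C_sym[OF G] by blast
  note distinct = mod5_consecutive_triple_distinct[OF T]
  have "a = a'" if "a \<in> Xset V E c j" "a' \<in> Xset V E c j" "E v a" "E v a'"
    and "v \<in> Xset V E c k \<or> v \<in> Xset V E c l" for v a a'
    using that distinct Xset_unique_neighbour[OF G C, of j] by blast
  then show False
    using cover[OF a(1)] cover[OF a(2)] cover[OF a(3)] a u w
      \<open>a1 \<noteq> a2\<close> \<open>a1 \<noteq> a3\<close> \<open>a2 \<noteq> a3\<close> by blast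
qed

lemma Xset_card_eq_1:
  assumes G: "in_class_C V E" and C: "induced_C5 V E c"
    and T: "{j, k, l} = {i mod 5, (i + 1) mod 5, (i + 2) mod 5}"
    and big: "3 \<le> card (Xset V E c j)"
    and "Xset V E c k \<noteq> {}" and "Xset V E c l \<noteq> {}"
  shows "card (Xset V E c k) = 1"
proof -
  obtain u where u: "u \<in> Xset V E c k" using \<open>Xset V E c k \<noteq> {}\<close> by blast
  obtain w where w: "w \<in> Xset V E c l" using \<open>Xset V E c l \<noteq> {}\<close> by blast
  have "u' = u" if "u' \<in> Xset V E c k" for u'
  proof (rule Xset_unique_neighbour[OF G C _ w that u])
    show "k mod 5 \<noteq> l mod 5" by (rule mod5_consecutive_triple_distinct(3)[OF T])
    show "E w u'" "E w u"
      using Xset_cross_adjacent[OF G C T big] that u w in_class_C_sym[OF G] by blast+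
  qed
  with u have "Xset V E c k = {u}" by blast
  then show ?thesis by simp
qed

theorem claim19:
  fixes V :: "'a set" and E :: "'a \<Rightarrow> 'a \<Rightarrow> bool" and c :: "nat \<Rightarrow> 'a" and i :: nat
  assumes "connected_graph V E"
    and "in_class_C V E"
    and "induced_C5 V E c"
    and "Xset V E c i \<noteq> {}" and "Xset V E c (i + 1) \<noteq> {}" and "Xset V E c (i + 2) \<noteq> {}"
    and "{j, k, l} = {i mod 5, (i + 1) mod 5, (i + 2) mod 5}"
    and "card (Xset V E c j) \<ge> 3"
  shows "card (Xset V E c k) = 1 \<and> card (Xset V E c l) = 1"
proof -
  have nonempty: "Xset V E c t \<noteq> {}" if "t \<in> {j, k, l}" for t
    using that assms(4-7) Xset_mod[of V E c i] Xset_mod[of V E c "i + 1"] Xset_mod[of V E c "i + 2"]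
    by auto
  have "{j, l, k} = {i mod 5, (i + 1) mod 5, (i + 2) mod 5}"
    using assms(7) by (simp add: insert_commute)
  then show ?thesis
    using Xset_card_eq_1[OF assms(2,3,7,8)] Xset_card_eq_1[OF assms(2,3) _ assms(8)] nonempty
    by simp
qed

end
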